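(* Let $n=5$, $a=(1,1,1,1,1)$ and $p(x)=\sum_{i=1}^5(x_i^2-1)^2+\big(\sum_{i=1}^5 x_i\big)^2$ for $x\in\mathbb{R}^5$. Then there is no $\epsilon>0$ such that $p(x)-\epsilon$ is a sum of squares of polynomials; that is, the (infeasible) partition instance $\{1,1,1,1,1\}$ is not sos-refutable.
   Context: A partition instance $a_1,\ldots,a_n$ of positive integers is called sos-refutable if there exists $\epsilon>0$ such that $p_a(x)-\epsilon$ is a sum of squares of polynomials, where $p_a(x)=\sum_i(x_i^2-1)^2+(\sum_i a_ix_i)^2$. *)

theory Defs
  imports Main Complex_Main
begin

text \<open>Points of R^n are represented as functions nat => real; only the
coordinates 0..n-1 are used. A polynomial in n variables is identified with
the polynomial function it induces on R^n (faithful over the infinite field R).\<close>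

definition poly_fun :: "nat \<Rightarrow> ((nat \<Rightarrow> real) \<Rightarrow> real) \<Rightarrow> bool" where
  "poly_fun n f \<longleftrightarrow>
     (\<exists>A c. finite A \<and> (\<forall>\<alpha>\<in>A. \<forall>i\<ge>n. \<alpha> i = 0) \<and>
        (\<forall>x. f x = (\<Sum>\<alpha>\<in>A. c \<alpha> * (\<Prod>i<n. x i ^ \<alpha> i))))"

definition is_sos :: "nat \<Rightarrow> ((nat \<Rightarrow> real) \<Rightarrow> real) \<Rightarrow> bool" where
  "is_sos n f \<longleftrightarrow>
     (\<exists>qs. (\<forall>q\<in>set qs. poly_fun n q) \<and> (\<forall>x. f x = (\<Sum>q\<leftarrow>qs. (q x)^2)))"

definition partition_poly :: "nat \<Rightarrow> (nat \<Rightarrow> int) \<Rightarrow> (nat \<Rightarrow> real) \<Rightarrow> real" where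
  "partition_poly n a x = (\<Sum>i<n. ((x i)^2 - 1)^2) + (\<Sum>i<n. real_of_int (a i) * x i)^2"

definition sos_refutable :: "nat \<Rightarrow> (nat \<Rightarrow> int) \<Rightarrow> bool" where
  "sos_refutable n a \<longleftrightarrow>
     (\<exists>\<epsilon>>0. is_sos n (\<lambda>x. partition_poly n a x - \<epsilon>))"

end

theory Submission
  imports Defs "HOL-Computational_Algebra.Polynomial"
begin

text \<open>In a sum-of-squares representation of \<open>p - \<epsilon>\<close> every square has degree at most 2:
restricted to a line through the origin the squares become univariate polynomials whose top
coefficients are squares and cannot cancel.
On the cube \<open>{-1,1}\<^sup>5\<close>, where \<open>p\<close> equals \<open>s\<^sup>2\<close> with \<open>s = x\<^sub>1 + \<dots> + x\<^sub>5\<close>,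
the weights \<open>W = 149 - 30 s\<^sup>2 + s\<^sup>4\<close> define a functional \<open>L g = \<Sum>\<^sub>v W v * g v\<close>.
Modulo \<open>x\<^sub>i\<^sup>2 = 1\<close> every quadratic is multilinear, and an explicit sum-of-squares identity
in its 16 coefficients gives \<open>L (q\<^sup>2) \<ge> 0\<close>, although \<open>W\<close> takes negative values.
But \<open>\<Sum>\<^sub>v W v = 2048\<close> and \<open>\<Sum>\<^sub>v W v * s\<^sup>2 = 0\<close>, so \<open>L (p - \<epsilon>) = -2048 \<epsilon> < 0\<close>.\<close>

definition poly_fun_deg_le :: "nat \<Rightarrow> nat \<Rightarrow> ((nat \<Rightarrow> real) \<Rightarrow> real) \<Rightarrow> bool" where
  "poly_fun_deg_le n k f \<longleftrightarrow>
     (\<exists>A c. finite A \<and> (\<forall>\<alpha>\<in>A. (\<Sum>i<n. \<alpha> i) \<le> k) \<and>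
        (\<forall>x. f x = (\<Sum>\<alpha>\<in>A. c \<alpha> * (\<Prod>i<n. x i ^ \<alpha> i))))"

lemma degree_sum_list_squares_le:
  fixes hs :: "'a::linordered_idom poly list"
  assumes "degree (\<Sum>h\<leftarrow>hs. h^2) \<le> 2 * k" "g \<in> set hs"
  shows "degree g \<le> k"
proof (rule ccontr)
  assume "\<not> degree g \<le> k"
  define D where "D = Max (degree ` set hs)"
  have le_D: "degree h \<le> D" if "h \<in> set hs" for h
    unfolding D_def using that by simp
  have "D \<in> degree ` set hs"
    unfolding D_def using assms(2) by (intro Max_in) auto
  then obtain h0 where h0: "h0 \<in> set hs" "degree h0 = D" by blast
  have "k < D" using le_D[OF assms(2)] \<open>\<not> degree g \<le> k\<close> by simp
  have top_coeff: "coeff (h^2) (D + D) = (coeff h D)^2" if "h \<in> set hs" for h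
  proof (cases "degree h = D")
    case True
    then show ?thesis using coeff_mult_degree_sum[of h h] by (simp add: power2_eq_square)
  next
    case False
    then have "degree (h * h) < D + D"
      using le_D[OF that] degree_mult_le[of h h] by linarith
    then show ?thesis using False le_D[OF that] by (simp add: power2_eq_square coeff_eq_0)
  qed
  have "(coeff h0 D)^2 \<le> (\<Sum>h\<leftarrow>hs. (coeff h D)^2)"
    using h0(1) by (intro member_le_sum_list) auto
  also have "(\<Sum>h\<leftarrow>hs. (coeff h D)^2) = coeff (\<Sum>h\<leftarrow>hs. h^2) (D + D)"
    using top_coeff by (induction hs) auto
  also have "\<dots> = 0"
    using assms(1) \<open>k < D\<close> by (intro coeff_eq_0) simp
  finally have "coeff h0 D = 0" by simp
  then show False
    using h0 \<open>k < D\<close> by (metis leading_coeff_0_iff degree_0 not_less0)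
qed

lemma sum_monom_truncate:
  fixes g :: "'b \<Rightarrow> 'a::comm_ring_1"
  assumes "finite A" "degree (\<Sum>\<alpha>\<in>A. monom (g \<alpha>) (d \<alpha>)) \<le> k"
  shows "(\<Sum>\<alpha>\<in>A. monom (g \<alpha>) (d \<alpha>)) = (\<Sum>\<alpha>\<in>{\<alpha>\<in>A. d \<alpha> \<le> k}. monom (g \<alpha>) (d \<alpha>))"
proof (rule poly_eqI)
  fix m
  show "coeff (\<Sum>\<alpha>\<in>A. monom (g \<alpha>) (d \<alpha>)) m = coeff (\<Sum>\<alpha>\<in>{\<alpha>\<in>A. d \<alpha> \<le> k}. monom (g \<alpha>) (d \<alpha>)) m"
  proof (cases "m \<le> k")
    case True
    then show ?thesis
      unfolding coeff_sum coeff_monom using assms(1) by (intro sum.mono_neutral_right) auto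
  next
    case False
    then have "coeff (\<Sum>\<alpha>\<in>A. monom (g \<alpha>) (d \<alpha>)) m = 0"
      using assms(2) by (intro coeff_eq_0) simp
    then show ?thesis
      using False unfolding coeff_sum coeff_monom by (auto intro!: sum.neutral)
  qed
qed

lemma sos_component_low_degree:
  fixes qs :: "((nat \<Rightarrow> real) \<Rightarrow> real) list"
  assumes rep: "\<And>q. q \<in> set qs \<Longrightarrow>
      finite (A q) \<and> (\<forall>x. q x = (\<Sum>\<alpha>\<in>A q. c q \<alpha> * (\<Prod>i<n. x i ^ \<alpha> i)))"
    and sos: "\<And>x. f x = (\<Sum>q\<leftarrow>qs. (q x)^2)"
    and ray: "\<And>x. \<exists>P. degree P \<le> 2 * k \<and> (\<forall>t. f (\<lambda>i. t * x i) = poly P t)"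
    and q: "q \<in> set qs"
  shows "q x = (\<Sum>\<alpha>\<in>{\<alpha>\<in>A q. (\<Sum>i<n. \<alpha> i) \<le> k}. c q \<alpha> * (\<Prod>i<n. x i ^ \<alpha> i))"
proof -
  define deg where "deg \<alpha> = (\<Sum>i<n. \<alpha> i)" for \<alpha> :: "nat \<Rightarrow> nat"
  \<comment> \<open>On the line through \<open>x\<close>, the coefficient of \<open>t^m\<close> collects the monomials of total degree \<open>m\<close>.\<close>
  define G where "G q' = (\<Sum>\<alpha>\<in>A q'. monom (c q' \<alpha> * (\<Prod>i<n. x i ^ \<alpha> i)) (deg \<alpha>))" for q'
  have poly_G: "poly (G q') t = q' (\<lambda>i. t * x i)" if "q' \<in> set qs" for q' t
    using rep[OF that]
    by (simp add: G_def deg_def poly_sum poly_monom power_mult_distrib prod.distrib power_sum mult_ac)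
  obtain P where P: "degree P \<le> 2 * k" "\<And>t. f (\<lambda>i. t * x i) = poly P t"
    using ray by blast
  have "poly (\<Sum>h\<leftarrow>map G qs. h^2) t = poly P t" for t
  proof -
    have "poly (\<Sum>h\<leftarrow>map G qs. h^2) t = (\<Sum>q\<leftarrow>qs. (poly (G q) t)^2)"
      by (induction qs) simp_all
    also have "\<dots> = (\<Sum>q\<leftarrow>qs. (q (\<lambda>i. t * x i))^2)"
      by (intro arg_cong[where f=sum_list] map_cong) (auto simp: poly_G)
    also have "\<dots> = f (\<lambda>i. t * x i)" by (rule sos[symmetric])
    also have "\<dots> = poly P t" by (rule P(2))
    finally show ?thesis .
  qed
  then have "poly (\<Sum>h\<leftarrow>map G qs. h^2) = poly P" by (rule ext)
  then have "(\<Sum>h\<leftarrow>map G qs. h^2) = P" by (simp add: poly_eq_poly_eq_iff)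
  then have "degree (\<Sum>h\<leftarrow>map G qs. h^2) \<le> 2 * k" using P(1) by simp
  then have "degree (G q) \<le> k"
    by (rule degree_sum_list_squares_le) (simp add: q)
  then have "G q = (\<Sum>\<alpha>\<in>{\<alpha>\<in>A q. deg \<alpha> \<le> k}. monom (c q \<alpha> * (\<Prod>i<n. x i ^ \<alpha> i)) (deg \<alpha>))"
    unfolding G_def using rep[OF q] by (intro sum_monom_truncate) auto
  then have "poly (G q) 1 = (\<Sum>\<alpha>\<in>{\<alpha>\<in>A q. deg \<alpha> \<le> k}. c q \<alpha> * (\<Prod>i<n. x i ^ \<alpha> i))"
    by (simp add: poly_sum poly_monom)
  then show ?thesis using poly_G[OF q, of 1] by (simp add: deg_def)
qed

lemma sos_components_degree_le:
  assumes "is_sos n f"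
    and ray: "\<And>x. \<exists>P. degree P \<le> 2 * k \<and> (\<forall>t. f (\<lambda>i. t * x i) = poly P t)"
  shows "\<exists>qs. (\<forall>q\<in>set qs. poly_fun_deg_le n k q) \<and> (\<forall>x. f x = (\<Sum>q\<leftarrow>qs. (q x)^2))"
proof -
  obtain qs where pf: "\<forall>q\<in>set qs. poly_fun n q" and sos: "\<forall>x. f x = (\<Sum>q\<leftarrow>qs. (q x)^2)"
    using assms(1) unfolding is_sos_def by blast
  obtain A c where rep: "\<And>q. q \<in> set qs \<Longrightarrow>
      finite (A q) \<and> (\<forall>x. q x = (\<Sum>\<alpha>\<in>A q. c q \<alpha> * (\<Prod>i<n. x i ^ \<alpha> i)))"
    using pf unfolding poly_fun_def by metis
  have "poly_fun_deg_le n k q" if q: "q \<in> set qs" for q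
    unfolding poly_fun_deg_le_def
  proof (intro exI conjI allI ballI)
    show "finite {\<alpha>\<in>A q. (\<Sum>i<n. \<alpha> i) \<le> k}" using rep[OF q] by simp
    show "q x = (\<Sum>\<alpha>\<in>{\<alpha>\<in>A q. (\<Sum>i<n. \<alpha> i) \<le> k}. c q \<alpha> * (\<Prod>i<n. x i ^ \<alpha> i))" for x
      by (rule sos_component_low_degree[OF rep sos[rule_format] ray q])
  qed simp
  then show ?thesis using sos by blast
qed

lemma partition_poly_along_ray:
  "\<exists>P. degree P \<le> 4 \<and> (\<forall>t. partition_poly n a (\<lambda>i. t * x i) - c = poly P t)"
proof (intro exI conjI allI)
  let ?P = "(\<Sum>i<n. [:-1, 0, x i^2:]^2) + [:0, \<Sum>i<n. of_int (a i) * x i:]^2 - [:c:]"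
  show "partition_poly n a (\<lambda>i. t * x i) - c = poly ?P t" for t
  proof -
    have "(\<Sum>i<n. of_int (a i) * (t * x i)) = t * (\<Sum>i<n. of_int (a i) * x i)"
      by (simp add: sum_distrib_left mult_ac)
    moreover have "((t * x i)^2 - 1)^2 = poly ([:-1, 0, x i^2:]^2) t" for i
      by (simp add: power2_eq_square algebra_simps)
    ultimately show ?thesis
      by (simp add: partition_poly_def poly_sum power_mult_distrib)
  qed
  have "degree ([:-1, 0, d:]^2) \<le> 4" "degree ([:0, d:]^2) \<le> 4" for d :: real
  proof -
    have "degree [:-1, 0, d:] \<le> 2" "degree [:0, d:] \<le> 2"
      by (simp_all add: degree_pCons_le)
    then show "degree ([:-1, 0, d:]^2) \<le> 4" "degree ([:0, d:]^2) \<le> 4"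
      using degree_power_le[of "[:-1, 0, d:]" 2] degree_power_le[of "[:0, d:]" 2] by simp_all
  qed
  then show "degree ?P \<le> 4"
    by (intro degree_diff_le degree_add_le degree_sum_le) auto
qed

lemma card_odd_exponents_le: "card {i. i < n \<and> odd (\<alpha> i)} \<le> (\<Sum>i<n. \<alpha> i)"
  for n :: nat
proof -
  let ?J = "{i. i < n \<and> odd (\<alpha> i)}"
  have "card ?J = (\<Sum>i\<in>?J. 1)" by simp
  also have "\<dots> \<le> (\<Sum>i\<in>?J. \<alpha> i)" by (intro sum_mono) (auto intro!: Suc_leI odd_pos)
  also have "\<dots> \<le> (\<Sum>i<n. \<alpha> i)" by (intro sum_mono2) auto
  finally show ?thesis .
qed

lemma sum_lessThan_of_bool_mult:
  fixes x :: "nat \<Rightarrow> 'a::semiring_1"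
  assumes "i < n"
  shows "(\<Sum>k<n. of_bool (k = i) * x k) = x i"
proof -
  have "(\<Sum>k<n. of_bool (k = i) * x k) = (\<Sum>k\<in>{..<n} \<inter> {k. k = i}. x k)"
    by (rule sum_of_bool_mult_eq) simp
  also have "{..<n} \<inter> {k. k = i} = {i}" using assms by auto
  finally show ?thesis by simp
qed

lemma sum_lessThan_5: "(\<Sum>i<5. f i) = f 0 + f 1 + f 2 + f 3 + f (4::nat)"
  by (simp add: eval_nat_numeral)

definition sign_vector :: "real \<Rightarrow> real \<Rightarrow> real \<Rightarrow> real \<Rightarrow> real \<Rightarrow> nat \<Rightarrow> real" where
  "sign_vector s0 s1 s2 s3 s4 i =
     (if i = 0 then s0 else if i = 1 then s1 else if i = 2 then s2 else if i = 3 then s3 else s4)"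

definition cube_points :: "(nat \<Rightarrow> real) list" where
  "cube_points = [sign_vector s0 s1 s2 s3 s4.
     s0 \<leftarrow> [1,-1], s1 \<leftarrow> [1,-1], s2 \<leftarrow> [1,-1], s3 \<leftarrow> [1,-1], s4 \<leftarrow> [1,-1]]"

lemma cube_points_sign: "v \<in> set cube_points \<Longrightarrow> v i = 1 \<or> v i = -1"
  unfolding cube_points_def sign_vector_def by (auto split: if_splits)

definition cube_weight :: "(nat \<Rightarrow> real) \<Rightarrow> real" where
  "cube_weight v = (let s = \<Sum>i<5. v i in 149 - 30 * s^2 + s^4)"

definition cube_functional :: "((nat \<Rightarrow> real) \<Rightarrow> real) \<Rightarrow> real" where
  "cube_functional g = (\<Sum>v\<leftarrow>cube_points. cube_weight v * g v)"

lemma cube_functional_cong: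
  "(\<And>v. v \<in> set cube_points \<Longrightarrow> f v = g v) \<Longrightarrow> cube_functional f = cube_functional g"
  unfolding cube_functional_def by (metis (no_types, lifting) map_cong)

lemma cube_functional_sum_list:
  "cube_functional (\<lambda>v. \<Sum>q\<leftarrow>qs. f q v) = (\<Sum>q\<leftarrow>qs. cube_functional (f q))"
  unfolding cube_functional_def by (induction qs) (simp_all add: distrib_left sum_list_addf)

lemma cube_functional_partition_poly:
  "cube_functional (\<lambda>v. partition_poly 5 (\<lambda>_. 1) v - c) = -2048 * c"
  by (simp add: cube_functional_def cube_points_def cube_weight_def sign_vector_def
      partition_poly_def sum_lessThan_5)

definition quadratic5 :: "real \<Rightarrow> (nat \<Rightarrow> real) \<Rightarrow> (nat \<Rightarrow> nat \<Rightarrow> real) \<Rightarrow> (nat \<Rightarrow> real) \<Rightarrow> real" where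
  "quadratic5 d a e x = d + (\<Sum>i<5. a i * x i) + (\<Sum>i<5. \<Sum>j<5. e i j * x i * x j)"

lemma quadratic5_add_scaled:
  "quadratic5 d a e x + k * quadratic5 d' a' e' x =
     quadratic5 (d + k * d') (\<lambda>i. a i + k * a' i) (\<lambda>i j. e i j + k * e' i j) x"
  by (simp add: quadratic5_def sum.distrib sum_distrib_left algebra_simps)

lemma monomial_on_cube:
  assumes "v \<in> set cube_points"
  shows "(\<Prod>i<5. v i ^ \<alpha> i) = (\<Prod>i\<in>{i. i < 5 \<and> odd (\<alpha> i)}. v i)"
proof -
  have "(\<Prod>i<5. v i ^ \<alpha> i) = (\<Prod>i<5. if odd (\<alpha> i) then v i else 1)"
  proof (rule prod.cong)
    fix i
    show "v i ^ \<alpha> i = (if odd (\<alpha> i) then v i else 1)"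
      using cube_points_sign[OF assms, of i] by auto
  qed simp
  also have "\<dots> = (\<Prod>i\<in>{i. i < 5 \<and> odd (\<alpha> i)}. v i)"
    by (simp add: prod.If_cases lessThan_def Collect_conj_eq Int_commute)
  finally show ?thesis .
qed

lemma monomial_quadratic5_on_cube:
  assumes "(\<Sum>i<5. \<alpha> i) \<le> 2"
  shows "\<exists>d a e. \<forall>v\<in>set cube_points. (\<Prod>i<5. v i ^ \<alpha> i) = quadratic5 d a e v"
proof -
  define J where "J = {i. i < 5 \<and> odd (\<alpha> i)}"
  have "finite J" "J \<subseteq> {..<5}" by (auto simp: J_def)
  have on_cube: "(\<Prod>i<5. v i ^ \<alpha> i) = (\<Prod>i\<in>J. v i)" if "v \<in> set cube_points" for v
    unfolding J_def by (rule monomial_on_cube[OF that])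
  have "card J \<le> 2" using card_odd_exponents_le[of 5 \<alpha>] assms by (simp add: J_def)
  then consider "J = {}" | i where "J = {i}" | i j where "J = {i, j}" "i \<noteq> j"
    using \<open>finite J\<close>
    by (metis card_0_eq card_1_singletonE card_2_iff le_Suc_eq numeral_2_eq_2 One_nat_def le_zero_eq)
  then show ?thesis
  proof cases
    case 1
    then show ?thesis using on_cube
      by (intro exI[of _ 1] exI[of _ "\<lambda>_. 0"] exI[of _ "\<lambda>_ _. 0"]) (simp add: quadratic5_def)
  next
    case (2 i)
    then have "i < 5" using \<open>J \<subseteq> {..<5}\<close> by auto
    then show ?thesis using on_cube 2
      by (intro exI[of _ 0] exI[of _ "\<lambda>k. of_bool (k = i)"] exI[of _ "\<lambda>_ _. 0"])
        (simp add: quadratic5_def sum_lessThan_of_bool_mult mult.commute)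
  next
    case (3 i j)
    then have "i < 5" "j < 5" using \<open>J \<subseteq> {..<5}\<close> by auto
    have "(\<Sum>k<5. \<Sum>l<5. of_bool (k = i) * of_bool (l = j) * x k * x l) = x i * x j"
      for x :: "nat \<Rightarrow> real"
    proof -
      have "(\<Sum>k<5. \<Sum>l<5. of_bool (k = i) * of_bool (l = j) * x k * x l) =
          (\<Sum>k<5. of_bool (k = i) * x k) * (\<Sum>l<5. of_bool (l = j) * x l)"
        unfolding sum_product by (intro sum.cong refl) (simp only: mult_ac)
      then show ?thesis using \<open>i < 5\<close> \<open>j < 5\<close> by (simp only: sum_lessThan_of_bool_mult)
    qed
    then show ?thesis using on_cube 3
      by (intro exI[of _ 0] exI[of _ "\<lambda>_. 0"] exI[of _ "\<lambda>k l. of_bool (k = i) * of_bool (l = j)"])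
        (simp add: quadratic5_def)
  qed
qed

lemma poly_fun_deg_le_quadratic5_on_cube:
  assumes "poly_fun_deg_le 5 2 q"
  shows "\<exists>d a e. \<forall>v\<in>set cube_points. q v = quadratic5 d a e v"
proof -
  obtain A c where A: "finite A" "\<forall>\<alpha>\<in>A. (\<Sum>i<5. \<alpha> i) \<le> 2"
    and q: "\<And>x. q x = (\<Sum>\<alpha>\<in>A. c \<alpha> * (\<Prod>i<5. x i ^ \<alpha> i))"
    using assms unfolding poly_fun_deg_le_def by blast
  have "\<exists>d a e. \<forall>v\<in>set cube_points. (\<Sum>\<alpha>\<in>B. c \<alpha> * (\<Prod>i<5. v i ^ \<alpha> i)) = quadratic5 d a e v"
    if "finite B" "B \<subseteq> A" for B
    using that
  proof (induction B rule: finite_induct)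
    case empty
    show ?case
      by (intro exI[of _ 0] exI[of _ "\<lambda>_. 0"] exI[of _ "\<lambda>_ _. 0"]) (simp add: quadratic5_def)
  next
    case (insert \<beta> B)
    then obtain d a e where IH: "\<forall>v\<in>set cube_points. (\<Sum>\<alpha>\<in>B. c \<alpha> * (\<Prod>i<5. v i ^ \<alpha> i)) = quadratic5 d a e v"
      by blast
    obtain d' a' e' where mono: "\<forall>v\<in>set cube_points. (\<Prod>i<5. v i ^ \<beta> i) = quadratic5 d' a' e' v"
      using monomial_quadratic5_on_cube A(2) insert.prems by blast
    show ?case
      using insert.hyps IH mono
      by (intro exI[of _ "d + c \<beta> * d'"] exI[of _ "\<lambda>i. a i + c \<beta> * a' i"]
          exI[of _ "\<lambda>i j. e i j + c \<beta> * e' i j"]) (simp add: quadratic5_add_scaled[symmetric])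
  qed
  then show ?thesis using A(1) q by auto
qed

definition multilinear5 :: "real \<Rightarrow> (nat \<Rightarrow> real) \<Rightarrow> (nat \<Rightarrow> nat \<Rightarrow> real) \<Rightarrow> (nat \<Rightarrow> real) \<Rightarrow> real" where
  "multilinear5 c b g x = c + (\<Sum>i<5. b i * x i) + (\<Sum>i<5. \<Sum>j<i. g i j * x i * x j)"

lemma multilinear5_expand:
  "multilinear5 c b g x = c + b 0 * x 0 + b 1 * x 1 + b 2 * x 2 + b 3 * x 3 + b 4 * x 4
     + g 1 0 * x 1 * x 0 + g 2 0 * x 2 * x 0 + g 2 1 * x 2 * x 1 + g 3 0 * x 3 * x 0
     + g 3 1 * x 3 * x 1 + g 3 2 * x 3 * x 2 + g 4 0 * x 4 * x 0 + g 4 1 * x 4 * x 1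
     + g 4 2 * x 4 * x 2 + g 4 3 * x 4 * x 3"
  by (simp add: multilinear5_def eval_nat_numeral algebra_simps)

lemma quadratic5_on_cube:
  assumes "v \<in> set cube_points"
  shows "quadratic5 d a e v = multilinear5 (d + (\<Sum>i<5. e i i)) a (\<lambda>i j. e i j + e j i) v"
proof -
  have "v i * v i = 1" for i using cube_points_sign[OF assms, of i] by auto
  show ?thesis
    unfolding multilinear5_expand quadratic5_def sum_lessThan_5
    using \<open>v 0 * v 0 = 1\<close> \<open>v 1 * v 1 = 1\<close> \<open>v 2 * v 2 = 1\<close> \<open>v 3 * v 3 = 1\<close> \<open>v 4 * v 4 = 1\<close>
    by algebra
qed

lemma cube_functional_multilinear5_sos:
  "3 * cube_functional (\<lambda>v. (multilinear5 c b g v)^2) =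
     384 * (4 * c - g 1 0 - g 2 0 - g 3 0 - g 4 0 - g 2 1 - g 3 1 - g 4 1 - g 3 2 - g 4 2 - g 4 3)^2
   + 640 * (3 * g 1 0 - g 2 0 - g 3 0 - g 4 0 - g 2 1 - g 3 1 - g 4 1 + g 3 2 + g 4 2 + g 4 3)^2
   + 320 * (4 * g 2 0 - 2 * g 3 0 - 2 * g 4 0 - 2 * g 2 1 + g 3 1 + g 4 1 - g 3 2 - g 4 2 + 2 * g 4 3)^2
   + 960 * (2 * g 3 0 - 2 * g 4 0 - g 3 1 + g 4 1 - g 3 2 + g 4 2)^2
   + 960 * (2 * g 2 1 - g 3 1 - g 4 1 - g 3 2 - g 4 2 + 2 * g 4 3)^2
   + 2880 * (g 3 1 - g 4 1 - g 3 2 + g 4 2)^2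
   + 1536 * ((b 0 - b 1)^2 + (b 0 - b 2)^2 + (b 0 - b 3)^2 + (b 0 - b 4)^2 + (b 1 - b 2)^2
             + (b 1 - b 3)^2 + (b 1 - b 4)^2 + (b 2 - b 3)^2 + (b 2 - b 4)^2 + (b 3 - b 4)^2)"
  unfolding cube_functional_def cube_points_def cube_weight_def multilinear5_expand
  by (simp add: sign_vector_def sum_lessThan_5 power2_eq_square) algebra

lemma cube_functional_square_nonneg:
  assumes "poly_fun_deg_le 5 2 q"
  shows "0 \<le> cube_functional (\<lambda>v. (q v)^2)"
proof -
  obtain d a e where "\<forall>v\<in>set cube_points. q v = quadratic5 d a e v"
    using poly_fun_deg_le_quadratic5_on_cube[OF assms] by blast
  then have "\<forall>v\<in>set cube_points. q v = multilinear5 (d + (\<Sum>i<5. e i i)) a (\<lambda>i j. e i j + e j i) v"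
    by (simp add: quadratic5_on_cube)
  then obtain c b g where "\<forall>v\<in>set cube_points. q v = multilinear5 c b g v" by blast
  then have "cube_functional (\<lambda>v. (q v)^2) = cube_functional (\<lambda>v. (multilinear5 c b g v)^2)"
    by (intro cube_functional_cong) simp
  moreover have "0 \<le> 3 * cube_functional (\<lambda>v. (multilinear5 c b g v)^2)"
    unfolding cube_functional_multilinear5_sos by simp
  ultimately show ?thesis by simp
qed

theorem proposition5p5:
  shows "\<not> sos_refutable 5 (\<lambda>_. 1)"
proof
  assume "sos_refutable 5 (\<lambda>_. 1)"
  then obtain \<epsilon> where "\<epsilon> > 0" and sos: "is_sos 5 (\<lambda>x. partition_poly 5 (\<lambda>_. 1) x - \<epsilon>)"
    unfolding sos_refutable_def by blast
  have "\<exists>P. degree P \<le> 2 * 2 \<and> (\<forall>t. partition_poly 5 (\<lambda>_. 1) (\<lambda>i. t * x i) - \<epsilon> = poly P t)" for x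
    using partition_poly_along_ray by simp
  then obtain qs where qs: "\<forall>q\<in>set qs. poly_fun_deg_le 5 2 q"
    and eq: "\<forall>x. partition_poly 5 (\<lambda>_. 1) x - \<epsilon> = (\<Sum>q\<leftarrow>qs. (q x)^2)"
    using sos_components_degree_le[OF sos] by blast
  have "-2048 * \<epsilon> = cube_functional (\<lambda>v. partition_poly 5 (\<lambda>_. 1) v - \<epsilon>)"
    by (rule cube_functional_partition_poly[symmetric])
  also have "\<dots> = (\<Sum>q\<leftarrow>qs. cube_functional (\<lambda>v. (q v)^2))"
    using eq cube_functional_sum_list[of "\<lambda>q v. (q v)^2" qs] by simp
  also have "\<dots> \<ge> 0"
    using qs by (intro sum_list_nonneg) (auto intro: cube_functional_square_nonneg)
  finally show False using \<open>\<epsilon> > 0\<close> by simp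
qed

end
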